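(* Suppose the neighbor graph $\mathbb N$ (no self-arcs, $m\ge2$ vertices) is strongly connected and let $\mathrm D$ be an ear decomposition of $\mathbb N$. If $\max_{\mathbb E\in\mathrm D} l(\mathbb E)\le n$, where $l(\mathbb E)$ is the number of arcs of the ear $\mathbb E$, then there exist matrices $C_{ji}$ (one per arc $(j,i)$ of $\mathbb N$, each with $n$ columns) with $\ker C_{ji}\ne0$ for every arc such that $\bar{\mathbb N}$ is well-configured.
   Context: Setup: $m$ agents labeled $1,\dots,m$ with states $x_i\in\mathbb R^n$; neighbor graph $\mathbb N$ is a directed graph on $\{1,\dots,m\}$ without self-arcs; each arc $(j,i)$ carries a real matrix $C_{ji}$ with $n$ columns; $\bar{\mathbb N}$ denotes $\mathbb N$ with these matrices. $\bar{\mathbb N}$ is well-configured if for all $x_1,\dots,x_m\in\mathbb R^n$, $C_{ji}x_i=C_{ji}x_j$ for every arc $(j,i)$ implies $x_1=\cdots=x_m$. A directed path is a subgraph with distinct vertices $v_0,\dots,v_k$ ($k\ge1$) and arcs $(v_{r-1},v_r)$; its end-vertices are $v_0,v_k$. A directed cycle is a subgraph with distinct vertices $v_1,\dots,v_k$ ($k\ge 2$) and arcs $(v_r,v_{r+1})$, $r<k$, and $(v_k,v_1)$. An ear decomposition of a directed graph $\mathbb G$ is a sequence of subgraphs $\mathbb E_0,\dots,\mathbb E_p$ such that $\mathbb E_0$ is a directed cycle, each $\mathbb E_i$ ($i\ge1$) is a directed path or directed cycle, the $\mathbb E_i$ are pairwise arc-disjoint with union $\mathbb G$, and for $i\ge1$: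 a cycle $\mathbb E_i$ has exactly one vertex in common with $\bigcup_{k<i}\mathbb E_k$, and a path $\mathbb E_i$ has its two end-vertices as the only vertices in common with $\bigcup_{k<i}\mathbb E_k$. The $\mathbb E_i$ are called ears. *)

theory Defs
  imports "Jordan_Normal_Form.Matrix"
begin

text \<open>A (sub)graph is a pair (vertex set, arc set); an arc (j,i) goes from j to i.\<close>
type_synonym graph = "nat set \<times> (nat \<times> nat) set"

definition is_dpath_of :: "nat list \<Rightarrow> graph \<Rightarrow> bool" where
  "is_dpath_of vs H \<longleftrightarrow> distinct vs \<and> length vs \<ge> 2 \<and> fst H = set vs \<and>
     snd H = {(vs ! r, vs ! (Suc r)) | r. Suc r < length vs}"

definition is_dcycle_of :: "nat list \<Rightarrow> graph \<Rightarrow> bool" where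
  "is_dcycle_of vs H \<longleftrightarrow> distinct vs \<and> length vs \<ge> 2 \<and> fst H = set vs \<and>
     snd H = {(vs ! r, vs ! (Suc r)) | r. Suc r < length vs} \<union> {(last vs, hd vs)}"

definition is_dpath :: "graph \<Rightarrow> bool" where
  "is_dpath H \<longleftrightarrow> (\<exists>vs. is_dpath_of vs H)"

definition is_dcycle :: "graph \<Rightarrow> bool" where
  "is_dcycle H \<longleftrightarrow> (\<exists>vs. is_dcycle_of vs H)"

definition prev_verts :: "graph list \<Rightarrow> nat \<Rightarrow> nat set" where
  "prev_verts D i = (\<Union>k<i. fst (D ! k))"

definition ear_decomposition :: "nat set \<Rightarrow> (nat \<times> nat) set \<Rightarrow> graph list \<Rightarrow> bool" where
  "ear_decomposition V A D \<longleftrightarrow>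
     D \<noteq> [] \<and>
     is_dcycle (D ! 0) \<and>
     (\<forall>i<length D. i \<ge> 1 \<longrightarrow> is_dpath (D ! i) \<or> is_dcycle (D ! i)) \<and>
     (\<forall>i<length D. \<forall>k<length D. i \<noteq> k \<longrightarrow> snd (D ! i) \<inter> snd (D ! k) = {}) \<and>
     (\<Union>i<length D. fst (D ! i)) = V \<and>
     (\<Union>i<length D. snd (D ! i)) = A \<and>
     (\<forall>i<length D. i \<ge> 1 \<longrightarrow>
        (is_dcycle (D ! i) \<longrightarrow> card (fst (D ! i) \<inter> prev_verts D i) = 1) \<and>
        (\<forall>vs. is_dpath_of vs (D ! i) \<longrightarrow>
               fst (D ! i) \<inter> prev_verts D i = {hd vs, last vs}))"

definition ear_length :: "graph \<Rightarrow> nat" where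
  "ear_length E = card (snd E)"

definition strongly_connected :: "nat set \<Rightarrow> (nat \<times> nat) set \<Rightarrow> bool" where
  "strongly_connected V A \<longleftrightarrow> (\<forall>i\<in>V. \<forall>j\<in>V. (i, j) \<in> A\<^sup>*)"

definition well_configured ::
    "nat \<Rightarrow> nat set \<Rightarrow> (nat \<times> nat) set \<Rightarrow> (nat \<times> nat \<Rightarrow> real mat) \<Rightarrow> bool" where
  "well_configured n V A C \<longleftrightarrow>
     (\<forall>x :: nat \<Rightarrow> real vec. (\<forall>i\<in>V. x i \<in> carrier_vec n) \<longrightarrow>
        (\<forall>(j, i)\<in>A. C (j, i) *\<^sub>v x i = C (j, i) *\<^sub>v x j) \<longrightarrow>
        (\<forall>i\<in>V. \<forall>j\<in>V. x i = x j))"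

end

theory Submission
  imports Defs
begin

text \<open>
  Give the arcs of each ear pairwise distinct coordinates, which is possible because an ear has
  at most n arcs, and let the matrix of an arc be the diagonal projection deleting its
  coordinate; its kernel contains the corresponding unit vector. If the consensus equations hold,
  then for every coordinate s the values x_i $ s agree across all arcs except at most one per
  ear. An ear with one broken arc is still tied to the earlier ears: a cycle minus an arc is a
  path through its attachment vertex, and a path minus an arc splits into two pieces, each
  containing an attached end-vertex. Induction along the decomposition makes x_i $ s constant.

  The hypotheses m \<ge> 2, no self-arcs and strong connectivity only guarantee that an ear
  decomposition exists; the argument does not use them.
\<close>

lemma equal_along_chain:
  assumes "a \<le> b" "\<And>t. a \<le> t \<Longrightarrow> t < b \<Longrightarrow> f t = f (Suc t)"
  shows "f a = f b"
  using assms by (induction rule: dec_induct) auto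

lemma wraparound_step:
  assumes "Suc t = length vs"
  shows "vs ! t = last vs" "vs ! (Suc t mod length vs) = hd vs"
proof -
  have "vs \<noteq> []"
    using assms by auto
  then show "vs ! t = last vs" "vs ! (Suc t mod length vs) = hd vs"
    unfolding assms by (simp_all add: last_conv_nth hd_conv_nth flip: assms)
qed

lemma cyclic_list_constant:
  assumes steps: "\<And>t. t < length vs \<Longrightarrow> t \<noteq> s \<Longrightarrow> y (vs ! t) = y (vs ! (Suc t mod length vs))"
    and r: "r < length vs"
  shows "y (vs ! r) = y (vs ! 0)"
proof (cases "r \<le> s")
  case True
  have "y (vs ! 0) = y (vs ! r)"
    by (rule equal_along_chain[where f = "\<lambda>t. y (vs ! t)"]) (use True r steps in auto)
  then show ?thesis by simp
next
  case False
  let ?l = "length vs - 1"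
  have "y (vs ! r) = y (vs ! ?l)"
    by (rule equal_along_chain[where f = "\<lambda>t. y (vs ! t)"]) (use False r steps in auto)
  also have "\<dots> = y (vs ! (Suc ?l mod length vs))"
    using steps[of ?l] False r by simp
  also have "Suc ?l mod length vs = 0"
    using r by (cases "length vs") auto
  finally show ?thesis .
qed

lemma distinct_nth_neq_except_one:
  assumes "distinct vs"
  obtains s where "\<And>t. t < length vs \<Longrightarrow> t \<noteq> s \<Longrightarrow> vs ! t \<noteq> u"
proof (cases "u \<in> set vs")
  case True
  then obtain s where "s < length vs" "vs ! s = u" by (auto simp: in_set_conv_nth)
  then show ?thesis using that assms by (metis nth_eq_iff_index_eq)
qed (use that in force)

definition equal_across_all_but_one :: "('v \<Rightarrow> 'a) \<Rightarrow> ('v \<times> 'v) set \<Rightarrow> bool" where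
  "equal_across_all_but_one y B \<longleftrightarrow> (\<exists>e. \<forall>(u, w) \<in> B - {e}. y u = y w)"

text \<open>A path whose end-vertices carry equal values is handled as a cycle whose closing step
  needs no arc.\<close>

lemma closed_walk_constant:
  assumes "distinct vs" "equal_across_all_but_one y B"
    and steps: "\<And>t. t < length vs \<Longrightarrow>
      (vs ! t, vs ! (Suc t mod length vs)) \<in> B \<or> y (vs ! t) = y (vs ! (Suc t mod length vs))"
    and "u \<in> set vs"
  shows "y u = y (hd vs)"
proof -
  obtain e where e: "\<forall>(j, w) \<in> B - {e}. y j = y w"
    using assms(2) by (auto simp: equal_across_all_but_one_def)
  obtain s where s: "\<And>t. t < length vs \<Longrightarrow> t \<noteq> s \<Longrightarrow> vs ! t \<noteq> fst e"
    using distinct_nth_neq_except_one[OF assms(1)] by blast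
  obtain r where r: "r < length vs" "u = vs ! r"
    using assms(4) by (auto simp: in_set_conv_nth)
  have "y (vs ! r) = y (vs ! 0)"
  proof (rule cyclic_list_constant[OF _ r(1)])
    fix t assume "t < length vs" "t \<noteq> s"
    then show "y (vs ! t) = y (vs ! (Suc t mod length vs))"
      using steps[of t] s[of t] e by auto
  qed
  moreover have "vs \<noteq> []"
    using r by auto
  ultimately show ?thesis
    using r by (simp add: hd_conv_nth)
qed

lemma dcycle_constant:
  assumes "is_dcycle_of vs H" "equal_across_all_but_one y (snd H)" "u \<in> fst H"
  shows "y u = y (hd vs)"
proof (rule closed_walk_constant)
  fix t assume t: "t < length vs"
  show "(vs ! t, vs ! (Suc t mod length vs)) \<in> snd H \<or> y (vs ! t) = y (vs ! (Suc t mod length vs))"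
  proof (cases "Suc t < length vs")
    case False
    then show ?thesis
      using assms(1) t wraparound_step[of t vs] by (simp add: is_dcycle_of_def)
  qed (use assms(1) in \<open>auto simp: is_dcycle_of_def\<close>)
qed (use assms in \<open>auto simp: is_dcycle_of_def\<close>)

lemma dpath_constant:
  assumes "is_dpath_of vs H" "equal_across_all_but_one y (snd H)" "y (last vs) = y (hd vs)"
    and "u \<in> fst H"
  shows "y u = y (hd vs)"
proof (rule closed_walk_constant)
  fix t assume t: "t < length vs"
  show "(vs ! t, vs ! (Suc t mod length vs)) \<in> snd H \<or> y (vs ! t) = y (vs ! (Suc t mod length vs))"
  proof (cases "Suc t < length vs")
    case False
    then show ?thesis
      using assms(3) t wraparound_step[of t vs] by simp
  qed (use assms(1) in \<open>auto simp: is_dpath_of_def\<close>)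
qed (use assms in \<open>auto simp: is_dpath_of_def\<close>)

lemma non_cycle_ear_is_attached_path:
  assumes ed: "ear_decomposition V A D" and "i < length D" "\<not> is_dcycle (D ! i)"
  obtains vs where "0 < i" "is_dpath_of vs (D ! i)"
    "fst (D ! i) \<inter> prev_verts D i = {hd vs, last vs}"
proof -
  have "is_dcycle (D ! 0)"
    using ed by (simp add: ear_decomposition_def)
  with assms have "0 < i"
    by (cases i) auto
  moreover have "\<forall>i<length D. 1 \<le> i \<longrightarrow> is_dpath (D ! i) \<or> is_dcycle (D ! i)"
    and attached: "\<forall>i<length D. 1 \<le> i \<longrightarrow>
      (\<forall>vs. is_dpath_of vs (D ! i) \<longrightarrow> fst (D ! i) \<inter> prev_verts D i = {hd vs, last vs})"
    using ed unfolding ear_decomposition_def by blast+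
  ultimately obtain vs where "is_dpath_of vs (D ! i)"
    using assms(2,3) by (auto simp: is_dpath_def)
  moreover from this have "fst (D ! i) \<inter> prev_verts D i = {hd vs, last vs}"
    using attached assms(2) \<open>0 < i\<close> by simp
  ultimately show ?thesis
    using that \<open>0 < i\<close> by blast
qed

lemma ear_vertices_constant:
  assumes ed: "ear_decomposition V A D" and i: "i < length D"
    and ear: "equal_across_all_but_one y (snd (D ! i))"
    and earlier: "\<forall>u \<in> prev_verts D i. \<forall>v \<in> prev_verts D i. y u = y v"
    and "u \<in> fst (D ! i)" "v \<in> fst (D ! i)"
  shows "y u = y v"
proof (cases "is_dcycle (D ! i)")
  case True
  then obtain vs where "is_dcycle_of vs (D ! i)"
    by (auto simp: is_dcycle_def)
  then show ?thesis
    using dcycle_constant ear assms(5,6) by metis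
next
  case False
  with ed i obtain vs where vs: "is_dpath_of vs (D ! i)"
    and "fst (D ! i) \<inter> prev_verts D i = {hd vs, last vs}"
    by (rule non_cycle_ear_is_attached_path)
  with earlier have "y (last vs) = y (hd vs)"
    by blast
  then show ?thesis
    using dpath_constant[OF vs ear] assms(5,6) by metis
qed

lemma ear_meets_earlier_ears:
  assumes ed: "ear_decomposition V A D" and "0 < i" "i < length D"
  shows "fst (D ! i) \<inter> prev_verts D i \<noteq> {}"
proof (cases "is_dcycle (D ! i)")
  case True
  with assms have "card (fst (D ! i) \<inter> prev_verts D i) = 1"
    by (simp add: ear_decomposition_def)
  then show ?thesis
    by auto
next
  case False
  with ed \<open>i < length D\<close> show ?thesis
    by (rule non_cycle_ear_is_attached_path) auto
qed

lemma ear_decomposition_constant: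
  assumes ed: "ear_decomposition V A D"
    and ears: "\<And>k. k < length D \<Longrightarrow> equal_across_all_but_one y (snd (D ! k))"
    and "u \<in> V" "v \<in> V"
  shows "y u = y v"
proof -
  have "\<forall>u \<in> prev_verts D i. \<forall>v \<in> prev_verts D i. y u = y v" if "i \<le> length D" for i
    using that
  proof (induction i)
    case (Suc i)
    have i: "i < length D"
      using Suc.prems by simp
    note IH = Suc.IH[OF less_imp_le[OF i]]
    have ear: "\<forall>u \<in> fst (D ! i). \<forall>v \<in> fst (D ! i). y u = y v"
      using ear_vertices_constant[OF ed i ears[OF i] IH] by blast
    have Suc_eq: "prev_verts D (Suc i) = prev_verts D i \<union> fst (D ! i)"
      by (auto simp: prev_verts_def lessThan_Suc)
    show ?case
    proof (cases "i = 0")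
      case True
      then have "prev_verts D (Suc i) = fst (D ! i)"
        unfolding Suc_eq by (simp add: prev_verts_def)
      then show ?thesis
        using ear by (simp only:)
    next
      case False
      then obtain w where w: "w \<in> fst (D ! i)" "w \<in> prev_verts D i"
        using ear_meets_earlier_ears[OF ed _ i] by blast
      have "y u = y w" if "u \<in> prev_verts D (Suc i)" for u
        using that w IH ear unfolding Suc_eq by blast
      then show ?thesis
        by (intro ballI) metis
    qed
  qed (simp add: prev_verts_def)
  moreover have "prev_verts D (length D) = V"
    using ed unfolding ear_decomposition_def prev_verts_def by (elim conjE)
  ultimately show ?thesis
    using assms(3,4) by blast
qed

lemma disjoint_family_labelling:
  assumes "\<And>k. k < K \<Longrightarrow> finite (S k) \<and> card (S k) \<le> n"
    and disj: "\<And>i k. i < K \<Longrightarrow> k < K \<Longrightarrow> i \<noteq> k \<Longrightarrow> S i \<inter> S k = {}"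
  obtains lab where "\<And>k. k < K \<Longrightarrow> inj_on lab (S k) \<and> lab ` S k \<subseteq> {..<n}"
proof -
  have "\<forall>k. \<exists>h. k < K \<longrightarrow> bij_betw h (S k) {0..<card (S k)}"
    using ex_bij_betw_finite_nat assms(1) by blast
  then obtain h where h: "\<And>k. k < K \<Longrightarrow> bij_betw (h k) (S k) {0..<card (S k)}"
    by metis
  define lab where "lab a = h (SOME k. k < K \<and> a \<in> S k) a" for a
  have "inj_on lab (S k) \<and> lab ` S k \<subseteq> {..<n}" if k: "k < K" for k
  proof -
    have "lab a = h k a" if "a \<in> S k" for a
    proof -
      have "(SOME k. k < K \<and> a \<in> S k) = k"
        using k that disj by (intro some_equality) blast+
      then show ?thesis
        by (simp add: lab_def)
    qed
    then have "inj_on lab (S k) = inj_on (h k) (S k)" "lab ` S k = h k ` S k"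
      by (auto cong: inj_on_cong image_cong)
    then show ?thesis
      using h[OF k] assms(1)[OF k] by (auto simp: bij_betw_def)
  qed
  then show ?thesis
    using that by blast
qed

lemma mat_diag_mult_vec:
  fixes f :: "nat \<Rightarrow> 'a :: semiring_0"
  assumes "v \<in> carrier_vec n"
  shows "mat_diag n f *\<^sub>v v = vec n (\<lambda>i. f i * v $ i)"
proof (rule eq_vecI)
  fix i assume "i < dim_vec (vec n (\<lambda>i. f i * v $ i))"
  then have i: "i < n" by simp
  have "(mat_diag n f *\<^sub>v v) $ i = (\<Sum>j\<in>{0..<n}. (if i = j then f j else 0) * v $ j)"
    using i assms by (simp add: mat_diag_def scalar_prod_def)
  also have "\<dots> = (\<Sum>j\<in>{0..<n}. if j = i then f i * v $ i else 0)"
    by (rule sum.cong) auto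
  also have "\<dots> = f i * v $ i"
    using i by simp
  finally show "(mat_diag n f *\<^sub>v v) $ i = vec n (\<lambda>i. f i * v $ i) $ i"
    using i by simp
qed (simp add: mat_diag_def)

definition delete_coord_mat :: "nat \<Rightarrow> nat \<Rightarrow> 'a :: semiring_1 mat" where
  "delete_coord_mat n l = mat_diag n (\<lambda>i. if i = l then 0 else 1)"

lemma delete_coord_mat_carrier: "delete_coord_mat n l \<in> carrier_mat n n"
  by (simp add: delete_coord_mat_def)

lemma delete_coord_mat_mult_vec:
  assumes "v \<in> carrier_vec n"
  shows "delete_coord_mat n l *\<^sub>v v = vec n (\<lambda>i. if i = l then 0 else v $ i)"
  using assms by (auto simp: delete_coord_mat_def mat_diag_mult_vec intro!: eq_vecI)

lemma delete_coord_mat_nontrivial_kernel: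
  fixes n l :: nat and C :: "'a :: semiring_1 mat"
  defines "C \<equiv> delete_coord_mat n l"
  assumes "l < n"
  shows "dim_col C = n \<and> (\<exists>v \<in> carrier_vec n. v \<noteq> 0\<^sub>v n \<and> C *\<^sub>v v = 0\<^sub>v (dim_row C))"
proof -
  have "C *\<^sub>v unit_vec n l = 0\<^sub>v n"
    by (auto simp: C_def delete_coord_mat_mult_vec unit_vec_def)
  moreover have "C \<in> carrier_mat n n"
    unfolding C_def by (rule delete_coord_mat_carrier)
  ultimately show ?thesis
    using assms by (intro conjI bexI[of _ "unit_vec n l"]) auto
qed

lemma well_configured_delete_coord:
  assumes ed: "ear_decomposition V A D" and "A \<subseteq> V \<times> V"
    and inj: "\<And>k. k < length D \<Longrightarrow> inj_on lab (snd (D ! k))"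
  shows "well_configured n V A (\<lambda>a. delete_coord_mat n (lab a))"
  unfolding well_configured_def
proof (intro allI impI ballI)
  fix x :: "nat \<Rightarrow> real vec" and u v
  assume x: "\<forall>i\<in>V. x i \<in> carrier_vec n"
    and agree: "\<forall>(j, i)\<in>A. delete_coord_mat n (lab (j, i)) *\<^sub>v x i = delete_coord_mat n (lab (j, i)) *\<^sub>v x j"
    and "u \<in> V" "v \<in> V"
  have arc_coord: "x j $ s = x w $ s" if jw: "(j, w) \<in> A" and "lab (j, w) \<noteq> s" "s < n" for j w s
  proof -
    have "x j \<in> carrier_vec n" "x w \<in> carrier_vec n"
      using x jw assms(2) by auto
    moreover have "delete_coord_mat n (lab (j, w)) *\<^sub>v x w = delete_coord_mat n (lab (j, w)) *\<^sub>v x j"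
      using agree jw by auto
    ultimately have "vec n (\<lambda>i. if i = lab (j, w) then 0 else x w $ i) =
        vec n (\<lambda>i. if i = lab (j, w) then 0 else x j $ i)"
      by (simp add: delete_coord_mat_mult_vec)
    then have "vec n (\<lambda>i. if i = lab (j, w) then 0 else x w $ i) $ s =
        vec n (\<lambda>i. if i = lab (j, w) then 0 else x j $ i) $ s"
      by (rule arg_cong)
    then show ?thesis
      using that by simp
  qed
  have "x u $ s = x v $ s" if s: "s < n" for s
  proof (rule ear_decomposition_constant[OF ed _ \<open>u \<in> V\<close> \<open>v \<in> V\<close>])
    fix k assume k: "k < length D"
    have "snd (D ! k) \<subseteq> A"
      using ed k unfolding ear_decomposition_def by blast
    moreover obtain e where e: "\<And>a. a \<in> snd (D ! k) \<Longrightarrow> a \<noteq> e \<Longrightarrow> lab a \<noteq> s"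
    proof (cases "\<exists>e \<in> snd (D ! k). lab e = s")
      case True
      then obtain e where "e \<in> snd (D ! k)" "lab e = s"
        by blast
      then show ?thesis
        using that inj_onD[OF inj[OF k]] by metis
    qed (use that in blast)
    ultimately show "equal_across_all_but_one (\<lambda>w. x w $ s) (snd (D ! k))"
      unfolding equal_across_all_but_one_def using arc_coord s by blast
  qed
  moreover have "dim_vec (x u) = n" "dim_vec (x v) = n"
    using x \<open>u \<in> V\<close> \<open>v \<in> V\<close> by auto
  ultimately show "x u = x v"
    by (intro eq_vecI) auto
qed

theorem corollary4:
  fixes m n :: nat and A :: "(nat \<times> nat) set" and D :: "graph list"
  assumes "m \<ge> 2"
    and "A \<subseteq> {1..m} \<times> {1..m}"
    and "\<forall>i. (i, i) \<notin> A"
    and "strongly_connected {1..m} A"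
    and "ear_decomposition {1..m} A D"
    and "\<forall>E\<in>set D. ear_length E \<le> n"
  shows "\<exists>C :: nat \<times> nat \<Rightarrow> real mat.
           (\<forall>a\<in>A. dim_col (C a) = n \<and>
              (\<exists>v \<in> carrier_vec n. v \<noteq> 0\<^sub>v n \<and> C a *\<^sub>v v = 0\<^sub>v (dim_row (C a)))) \<and>
           well_configured n {1..m} A C"
proof -
  note ed = assms(5)
  have arcs: "A = (\<Union>k<length D. snd (D ! k))"
    and disj: "\<forall>i<length D. \<forall>k<length D. i \<noteq> k \<longrightarrow> snd (D ! i) \<inter> snd (D ! k) = {}"
    using ed unfolding ear_decomposition_def by blast+
  have "finite A"
    using assms(2) finite_subset by blast
  then have ears: "finite (snd (D ! k)) \<and> card (snd (D ! k)) \<le> n" if "k < length D" for k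
    using arcs that assms(6) by (auto simp: ear_length_def intro: finite_subset)
  obtain lab where lab: "\<And>k. k < length D \<Longrightarrow> inj_on lab (snd (D ! k)) \<and> lab ` snd (D ! k) \<subseteq> {..<n}"
    by (rule disjoint_family_labelling[of "length D" "\<lambda>k. snd (D ! k)" n]) (use ears disj in auto)
  define C where "C a = (delete_coord_mat n (lab a) :: real mat)" for a
  have "lab a < n" if "a \<in> A" for a
    using lab arcs that by blast
  then have "\<forall>a\<in>A. dim_col (C a) = n \<and>
      (\<exists>v \<in> carrier_vec n. v \<noteq> 0\<^sub>v n \<and> C a *\<^sub>v v = 0\<^sub>v (dim_row (C a)))"
    unfolding C_def using delete_coord_mat_nontrivial_kernel by blast
  moreover have "well_configured n {1..m} A C"
    unfolding C_def using ed assms(2) lab by (intro well_configured_delete_coord) auto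
  ultimately show ?thesis
    by blast
qed

end
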